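(* In the setting of the context, for $c\in\mathbb{R}$ let $P(c)$ be the polygon with vertices $P_i(c)=M_i+cU_i$, $1\le i\le 2n$, and write $P_{i+1}(c)-P_i(c)=\lambda_{i+\frac12}(c)V_{i+\frac12}$. If all $\lambda_{i+\frac12}(c)\ge0$, then the $V$-length of $P(c)$ satisfies $$L_V(P(c))=\sum_{i=1}^{2n}\lambda_{i+\frac12}(c)=2c\,A(U),$$ where $A(U)=\frac12\sum_{i=1}^{2n}[U_i,U_{i+1}]$ is the area of $U$.
   Context: $[x,y]$ denotes the determinant of the matrix with columns $x,y\in\mathbb{R}^2$. Fix $n\ge2$; indices (integer and half-integer) are read modulo $2n$. $U$ is a convex $2n$-gon with distinct vertices $U_1,\dots,U_{2n}$ in counterclockwise order with $U_{i+n}=-U_i$, and $V_{i+\frac12}=(U_{i+1}-U_i)/[U_i,U_{i+1}]$. Let $a>0$ and let $P$ be a convex polygon with nonempty interior and vertex list $P_1,\dots,P_{2n}$ (consecutive entries may coincide) with $P_{i+1}-P_i$ a nonnegative multiple of $V_{i+\frac12}$ and $P_i-P_{i+n}=2aU_i$ for all $i$ (a polygon of constant $U$-width). Its central equidistant $M$ has vertices $M_i=\frac12(P_i+P_{i+n})$ (so $M_{i+n}=M_i$). The $V$-length of a polygon $Q_1,\dots,Q_{2n}$ with $Q_{i+1}-Q_i=\lambda_{i+\frac12}V_{i+\frac12}$, $\lambda_{i+\frac12}\ge0$, is $L_V(Q)=\sum_i\lambda_{i+\frac12}$. *)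

theory Defs
  imports "HOL-Analysis.Analysis"
begin

text \<open>Polygons are given by
  vertex functions on nat, periodic with period N (indices read modulo N);
  the half-integer index i+1/2 is represented by the integer i.\<close>

definition det2 :: "real \<times> real \<Rightarrow> real \<times> real \<Rightarrow> real" where
  "det2 x y = fst x * snd y - snd x * fst y"

definition periodic :: "nat \<Rightarrow> (nat \<Rightarrow> 'a) \<Rightarrow> bool" where
  "periodic N Q \<longleftrightarrow> (\<forall>i. Q (i + N) = Q i)"

definition convex_ccw_polygon :: "nat \<Rightarrow> (nat \<Rightarrow> real \<times> real) \<Rightarrow> bool" where
  "convex_ccw_polygon N Q \<longleftrightarrow> 3 \<le> N \<and> periodic N Q \<and>
     (\<forall>i<N. \<forall>j<N. i \<noteq> j \<longrightarrow> Q i \<noteq> Q j) \<and>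
     (\<forall>i<N. \<forall>j<N. j \<noteq> i \<and> j \<noteq> Suc i mod N \<longrightarrow> det2 (Q (Suc i) - Q i) (Q j - Q i) > 0)"

definition Vdir :: "(nat \<Rightarrow> real \<times> real) \<Rightarrow> nat \<Rightarrow> real \<times> real" where
  "Vdir U i = (1 / det2 (U i) (U (Suc i))) *\<^sub>R (U (Suc i) - U i)"

definition areaU :: "nat \<Rightarrow> (nat \<Rightarrow> real \<times> real) \<Rightarrow> real" where
  "areaU n U = (1/2) * (\<Sum>i<2*n. det2 (U i) (U (Suc i)))"

definition const_width_polygon :: "nat \<Rightarrow> (nat \<Rightarrow> real \<times> real) \<Rightarrow> real \<Rightarrow> (nat \<Rightarrow> real \<times> real) \<Rightarrow> bool" where
  "const_width_polygon n U a P \<longleftrightarrow> periodic (2*n) P \<and>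
     interior (convex hull (P ` {..<2*n})) \<noteq> {} \<and>
     (\<forall>i. \<exists>t\<ge>0. P (Suc i) - P i = t *\<^sub>R Vdir U i) \<and>
     (\<forall>i. P i - P (i + n) = (2 * a) *\<^sub>R U i)"

definition central_equidistant :: "nat \<Rightarrow> (nat \<Rightarrow> real \<times> real) \<Rightarrow> nat \<Rightarrow> real \<times> real" where
  "central_equidistant n P i = (1/2) *\<^sub>R (P i + P (i + n))"

end

theory Submission
  imports Defs
begin

text \<open>Pairing the hypothesis with [U_i, -], which takes the value 1 on V_{i+1/2}, gives
  lam_{i+1/2}(c) = [U_i, M_{i+1} - M_i] + c [U_i, U_{i+1}]. The central equidistant has
  period n while U_{i+n} = -U_i, so the first summand changes sign under i \<mapsto> i + n and
  sums to zero over a full period; the second sums to 2c A(U).\<close>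

lemma periodic_add_mult:
  assumes "periodic N Q"
  shows "Q (i + k * N) = Q i"
proof (induction k)
  case (Suc k)
  then show ?case
    using assms by (simp add: periodic_def add.assoc [symmetric] add.commute [of N])
qed simp

lemma periodic_mod:
  assumes "periodic N Q"
  shows "Q (i mod N) = Q i"
  using periodic_add_mult [OF assms, of "i mod N" "i div N"] by (simp add: mod_div_mult_eq)

lemma det2_scaleR_right: "det2 x (r *\<^sub>R y) = r * det2 x y"
  by (simp add: det2_def algebra_simps)

lemma det2_diff_right: "det2 x (y - z) = det2 x y - det2 x z"
  by (simp add: det2_def algebra_simps)

lemma det2_self: "det2 x x = 0"
  by (simp add: det2_def)

lemma det2_Vdir:
  assumes "det2 (U i) (U (Suc i)) \<noteq> 0"
  shows "det2 (U i) (Vdir U i) = 1"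
  using assms by (simp add: Vdir_def det2_scaleR_right det2_diff_right det2_self)

lemma antipodal_index_mod:
  assumes "k < 2 * n" and "2 \<le> n"
  shows "(k + n) mod (2 * n) \<noteq> k" and "(k + n) mod (2 * n) \<noteq> Suc k mod (2 * n)"
  using assms by (auto simp: mod_if)

text \<open>The antipode U_{i+n} = -U_i lies strictly left of the edge from U_i to U_{i+1},
  and [U_{i+1} - U_i, -2 U_i] = 2 [U_i, U_{i+1}].\<close>
lemma symmetric_convex_polygon_det2_pos:
  assumes "2 \<le> n" and U: "convex_ccw_polygon (2 * n) U" and sym: "\<forall>i. U (i + n) = - U i"
  shows "det2 (U i) (U (Suc i)) > 0"
proof -
  have per: "periodic (2 * n) U"
    using U by (simp add: convex_ccw_polygon_def)
  define k where "k = i mod (2 * n)"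
  define j where "j = (k + n) mod (2 * n)"
  have k: "k < 2 * n" and j: "j < 2 * n"
    using assms(1) by (simp_all add: k_def j_def)
  have "det2 (U (Suc k) - U k) (U j - U k) > 0"
    using U k j antipodal_index_mod [OF k assms(1)]
    unfolding convex_ccw_polygon_def j_def by blast
  moreover have "U k = U i"
    using periodic_mod [OF per] by (simp add: k_def)
  moreover have "U (Suc k) = U (Suc i)"
    using periodic_mod [OF per, of "Suc k"] periodic_mod [OF per, of "Suc i"]
    by (simp add: k_def mod_Suc_eq)
  moreover have "U j = - U i"
    using periodic_mod [OF per, of "k + n"] sym \<open>U k = U i\<close> by (simp add: j_def)
  ultimately show ?thesis
    by (simp add: det2_def algebra_simps)
qed

lemma sum_antiperiodic_eq_0:
  fixes f :: "nat \<Rightarrow> 'a::ab_group_add"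
  assumes "\<And>i. f (i + n) = - f i"
  shows "(\<Sum>i<2 * n. f i) = 0"
proof -
  have "(\<Sum>i<2 * n. f i) = (\<Sum>i<n. f i) + (\<Sum>i<n. f (i + n))"
    by (simp add: mult_2 lessThan_atLeast0 sum.atLeastLessThan_concat [symmetric]
        sum.shift_bounds_nat_ivl [symmetric] add.commute)
  also have "\<dots> = 0"
    by (simp add: assms sum_negf)
  finally show ?thesis .
qed

lemma central_equidistant_add_half_period:
  assumes "periodic (2 * n) P"
  shows "central_equidistant n P (i + n) = central_equidistant n P i"
  using assms by (simp add: central_equidistant_def periodic_def mult_2 add.assoc add.left_commute)

theorem proposition3p1:
  fixes n :: nat and U P :: "nat \<Rightarrow> real \<times> real" and a c :: real
    and lam :: "nat \<Rightarrow> real"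
  assumes "n \<ge> 2"
    and "convex_ccw_polygon (2*n) U"
    and "\<forall>i. U (i + n) = - U i"
    and "a > 0"
    and "const_width_polygon n U a P"
    and "\<forall>i. (central_equidistant n P (Suc i) + c *\<^sub>R U (Suc i))
               - (central_equidistant n P i + c *\<^sub>R U i) = lam i *\<^sub>R Vdir U i"
    and "\<forall>i. lam i \<ge> 0"
  shows "(\<Sum>i<2*n. lam i) = 2 * c * areaU n U"
proof -
  define M where "M = central_equidistant n P"
  define f where "f i = det2 (U i) (M (Suc i) - M i)" for i
  have lam_eq: "lam i = f i + c * det2 (U i) (U (Suc i))" for i
  proof -
    have "lam i = det2 (U i) (lam i *\<^sub>R Vdir U i)"
      using det2_Vdir symmetric_convex_polygon_det2_pos [OF assms(1-3), of i]
      by (simp add: det2_scaleR_right)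
    also have "\<dots> = det2 (U i) ((M (Suc i) - M i) + c *\<^sub>R (U (Suc i) - U i))"
      using assms(6) by (simp add: M_def algebra_simps)
    finally show ?thesis
      by (simp add: f_def det2_def algebra_simps)
  qed
  have "periodic (2 * n) P"
    using assms(5) by (simp add: const_width_polygon_def)
  then have "f (i + n) = - f i" for i
    using assms(3) central_equidistant_add_half_period [of n P i]
      central_equidistant_add_half_period [of n P "Suc i"]
    by (simp add: f_def M_def det2_def algebra_simps)
  then have "(\<Sum>i<2 * n. f i) = 0"
    by (rule sum_antiperiodic_eq_0)
  then show ?thesis
    by (simp add: lam_eq sum.distrib sum_distrib_left areaU_def)
qed

end
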